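(* For all terms $M,N$: if $M\sim_{\alpha s} N$ then $M\sim_\alpha N$.
   Context: Let $\mathcal V$ (the variables) be a type with decidable equality, equipped with functions $\mathrm{encode}:\mathcal V\to\mathbb N$ and $\mathrm{decode}:\mathbb N\to\mathcal V$ such that $\mathrm{encode}(\mathrm{decode}\,n)=n$ for all $n$. Let $\mathcal C$ (the constants) be any type. Terms $\Lambda$ are generated by: $c\,k$ ($k\in\mathcal C$), $v\,x$ ($x\in\mathcal V$), $\lambda[x:A]M$, $\Pi[x:A]B$ and $M\cdot N$; in $\lambda[x:A]M$ and $\Pi[x:A]B$ the name $x$ binds in $M$ (resp. $B$) but not in $A$. Terms are raw first-order syntax (not identified up to renaming of bound variables) and $\equiv$ denotes syntactic identity. The list of free variables is $\mathrm{fv}(c\,k)=[\,]$, $\mathrm{fv}(v\,x)=[x]$, $\mathrm{fv}(\lambda[x:A]M)=\mathrm{fv}\,A\mathbin{+\!\!+}(\mathrm{fv}\,M-x)$, $\mathrm{fv}(\Pi[x:A]B)=\mathrm{fv}\,A\mathbin{+\!\!+}(\mathrm{fv}\,B-x)$, $\mathrm{fv}(M\cdot N)=\mathrm{fv}\,M\mathbin{+\!\!+}\mathrm{fv}\,N$, where $\mathbin{+\!\!+}$ is list concatenation and $xs-x$ deletes every occurrence of $x$ from $xs$. Fix a function $\chi':\mathrm{List}\,\mathbb N\to\mathbb N$ with $\chi'(ns)\notin ns$ for every list $ns$, and put $X'(xs)=\mathrm{decode}(\chi'(\mathrm{map}\ \mathrm{encode}\ xs))$. A substitution is any function $\sigma:\mathcal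 V\to\Lambda$; $\iota=v$ is the identity substitution; $(\sigma,x:=N)(y)=N$ if $y=x$ and $\sigma\,y$ otherwise. For a substitution $\sigma$ and a list $xs$ of variables, $X(\sigma,xs)=X'(\text{concatenation of the lists }\mathrm{fv}(\sigma\,y)\text{ for }y\in xs)$. The action $M\bullet\sigma$ is defined by structural recursion: $c\,k\bullet\sigma=c\,k$; $v\,x\bullet\sigma=\sigma\,x$; $(M\cdot N)\bullet\sigma=(M\bullet\sigma)\cdot(N\bullet\sigma)$; $(\lambda[x:A]M)\bullet\sigma=\lambda[y:A\bullet\sigma](M\bullet(\sigma,x:=v\,y))$ with $y=X(\sigma,\mathrm{fv}\,M-x)$; $(\Pi[x:A]B)\bullet\sigma=\Pi[y:A\bullet\sigma](B\bullet(\sigma,x:=v\,y))$ with $y=X(\sigma,\mathrm{fv}\,B-x)$. Unary substitution is $M[x:=N]=M\bullet(\iota,x:=N)$. $\alpha$-conversion $\sim_\alpha$ is the inductively defined relation with rules: $c\,k\sim_\alpha c\,k$; $v\,x\sim_\alpha v\,x$; $M\cdot N\sim_\alpha M'\cdot N'$ if $M\sim_\alpha M'$ and $N\sim_\alpha N'$; $\lambda[x:A]M\sim_\alpha\lambda[x':A']M'$ if $A\sim_\alpha A'$ and there is a variable $y$ with $y\notin\mathrm{fv}\,M-x$, $y\notin\mathrm{fv}\,M'-x'$ and $M[x:=v\,y]\equiv M'[x':=v\,y]$; and the same rule with $\Pi$ in place of $\lambda$. The relation $\sim_{\alpha s}$ is defined inductively by the same rules as $\sim_\alpha$ (with $\sim_{\alpha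 s}$ in place of $\sim_\alpha$ in the premises), except that in the rules for $\lambda$ and $\Pi$ the premise $M[x:=v\,y]\equiv M'[x':=v\,y]$ is replaced by $M[x:=v\,y]\sim_{\alpha s}M'[x':=v\,y]$ (the side conditions $y\notin\mathrm{fv}\,M-x$, $y\notin\mathrm{fv}\,M'-x'$ and $A\sim_{\alpha s}A'$ are kept). *)

theory Defs
  imports Main
begin

text \<open>Raw terms over constants 'c and variables 'v.
  Lam x A M and Pi x A B: x binds in the body, not in the type annotation A.\<close>
datatype ('c, 'v) trm =
    Con 'c
  | Var 'v
  | Lam 'v "('c, 'v) trm" "('c, 'v) trm"
  | Pi 'v "('c, 'v) trm" "('c, 'v) trm"
  | App "('c, 'v) trm" "('c, 'v) trm"

fun fv :: "('c, 'v) trm \<Rightarrow> 'v list" where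
  "fv (Con k) = []"
| "fv (Var x) = [x]"
| "fv (Lam x A M) = fv A @ removeAll x (fv M)"
| "fv (Pi x A B) = fv A @ removeAll x (fv B)"
| "fv (App M N) = fv M @ fv N"

definition Xp :: "('v \<Rightarrow> nat) \<Rightarrow> (nat \<Rightarrow> 'v) \<Rightarrow> (nat list \<Rightarrow> nat) \<Rightarrow> 'v list \<Rightarrow> 'v" where
  "Xp enc dec chi xs = dec (chi (map enc xs))"

definition Xs :: "('v \<Rightarrow> nat) \<Rightarrow> (nat \<Rightarrow> 'v) \<Rightarrow> (nat list \<Rightarrow> nat)
    \<Rightarrow> ('v \<Rightarrow> ('c, 'v) trm) \<Rightarrow> 'v list \<Rightarrow> 'v" where
  "Xs enc dec chi \<sigma> xs = Xp enc dec chi (concat (map (\<lambda>y. fv (\<sigma> y)) xs))"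

fun sbs :: "('v \<Rightarrow> nat) \<Rightarrow> (nat \<Rightarrow> 'v) \<Rightarrow> (nat list \<Rightarrow> nat)
    \<Rightarrow> ('c, 'v) trm \<Rightarrow> ('v \<Rightarrow> ('c, 'v) trm) \<Rightarrow> ('c, 'v) trm" where
  "sbs enc dec chi (Con k) \<sigma> = Con k"
| "sbs enc dec chi (Var x) \<sigma> = \<sigma> x"
| "sbs enc dec chi (App M N) \<sigma> = App (sbs enc dec chi M \<sigma>) (sbs enc dec chi N \<sigma>)"
| "sbs enc dec chi (Lam x A M) \<sigma> =
     (let y = Xs enc dec chi \<sigma> (removeAll x (fv M))
      in Lam y (sbs enc dec chi A \<sigma>) (sbs enc dec chi M (\<sigma>(x := Var y))))"
| "sbs enc dec chi (Pi x A B) \<sigma> =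
     (let y = Xs enc dec chi \<sigma> (removeAll x (fv B))
      in Pi y (sbs enc dec chi A \<sigma>) (sbs enc dec chi B (\<sigma>(x := Var y))))"

definition usb :: "('v \<Rightarrow> nat) \<Rightarrow> (nat \<Rightarrow> 'v) \<Rightarrow> (nat list \<Rightarrow> nat)
    \<Rightarrow> ('c, 'v) trm \<Rightarrow> 'v \<Rightarrow> ('c, 'v) trm \<Rightarrow> ('c, 'v) trm" where
  "usb enc dec chi M x N = sbs enc dec chi M (Var(x := N))"

inductive alpha :: "('v \<Rightarrow> nat) \<Rightarrow> (nat \<Rightarrow> 'v) \<Rightarrow> (nat list \<Rightarrow> nat)
    \<Rightarrow> ('c, 'v) trm \<Rightarrow> ('c, 'v) trm \<Rightarrow> bool"
  for enc dec chi where
  a_con: "alpha enc dec chi (Con k) (Con k)"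
| a_var: "alpha enc dec chi (Var x) (Var x)"
| a_app: "alpha enc dec chi M M' \<Longrightarrow> alpha enc dec chi N N'
          \<Longrightarrow> alpha enc dec chi (App M N) (App M' N')"
| a_lam: "alpha enc dec chi A A' \<Longrightarrow> y \<notin> set (removeAll x (fv M))
          \<Longrightarrow> y \<notin> set (removeAll x' (fv M'))
          \<Longrightarrow> usb enc dec chi M x (Var y) = usb enc dec chi M' x' (Var y)
          \<Longrightarrow> alpha enc dec chi (Lam x A M) (Lam x' A' M')"
| a_pi: "alpha enc dec chi A A' \<Longrightarrow> y \<notin> set (removeAll x (fv M))
          \<Longrightarrow> y \<notin> set (removeAll x' (fv M'))
          \<Longrightarrow> usb enc dec chi M x (Var y) = usb enc dec chi M' x' (Var y)
          \<Longrightarrow> alpha enc dec chi (Pi x A M) (Pi x' A' M')"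

inductive alphas :: "('v \<Rightarrow> nat) \<Rightarrow> (nat \<Rightarrow> 'v) \<Rightarrow> (nat list \<Rightarrow> nat)
    \<Rightarrow> ('c, 'v) trm \<Rightarrow> ('c, 'v) trm \<Rightarrow> bool"
  for enc dec chi where
  as_con: "alphas enc dec chi (Con k) (Con k)"
| as_var: "alphas enc dec chi (Var x) (Var x)"
| as_app: "alphas enc dec chi M M' \<Longrightarrow> alphas enc dec chi N N'
          \<Longrightarrow> alphas enc dec chi (App M N) (App M' N')"
| as_lam: "alphas enc dec chi A A' \<Longrightarrow> y \<notin> set (removeAll x (fv M))
          \<Longrightarrow> y \<notin> set (removeAll x' (fv M'))
          \<Longrightarrow> alphas enc dec chi (usb enc dec chi M x (Var y)) (usb enc dec chi M' x' (Var y))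
          \<Longrightarrow> alphas enc dec chi (Lam x A M) (Lam x' A' M')"
| as_pi: "alphas enc dec chi A A' \<Longrightarrow> y \<notin> set (removeAll x (fv M))
          \<Longrightarrow> y \<notin> set (removeAll x' (fv M'))
          \<Longrightarrow> alphas enc dec chi (usb enc dec chi M x (Var y)) (usb enc dec chi M' x' (Var y))
          \<Longrightarrow> alphas enc dec chi (Pi x A M) (Pi x' A' M')"

end

theory Submission
  imports Defs
begin

text \<open>
  By induction on \<open>\<sim>\<^sub>\<alpha>\<^sub>s\<close>, strengthened to: related terms have equal instances
  \<open>M \<bullet> \<sigma> = N \<bullet> \<sigma>\<close> under every substitution \<open>\<sigma>\<close>. In the binder case the renamed bodies
  \<open>M[x:=y]\<close> and \<open>M'[x':=y]\<close> agree under every substitution. Taking \<open>(\<sigma>, y:=z)\<close> and the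
  composition law \<open>(M \<bullet> \<rho>) \<bullet> \<sigma> = M \<bullet> (\<rho> \<bullet> \<sigma>)\<close> gives \<open>M \<bullet> (\<sigma>, x:=z) = M' \<bullet> (\<sigma>, x':=z)\<close>;
  taking \<open>\<iota>\<close> and comparing free variables gives \<open>fv M - x = fv M' - x'\<close>, so both binders
  pick the same fresh name and the two abstractions have equal instances. The composition law
  holds because the picked names are fresh, which is where \<open>encode \<circ> decode = id\<close> and
  \<open>\<chi>' ns \<notin> ns\<close> are used. Finally \<open>M[x:=y] \<bullet> \<iota> = M[x:=y]\<close>, so equal instances under \<open>\<iota>\<close>
  make the renamed bodies syntactically equal, and the same \<open>y\<close> witnesses \<open>\<sim>\<^sub>\<alpha>\<close>.
\<close>

lemma removeAll_concat_map_upd: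
  assumes "\<And>w. w \<in> set L \<Longrightarrow> w \<noteq> x \<Longrightarrow> z \<notin> set (f w)"
  shows "removeAll z (concat (map (f(x := [z])) L)) = concat (map f (removeAll x L))"
  using assms by (induction L) (auto simp: removeAll_id)

lemma concat_concat: "concat (concat xss) = concat (map concat xss)"
  by (induction xss) simp_all

lemma removeAll_map_rename:
  "y \<notin> set (removeAll x L) \<Longrightarrow> removeAll y (map (\<lambda>w. if w = x then y else w) L) = removeAll x L"
  by (induction L) auto

lemma Xs_cong:
  "(\<And>w. w \<in> set L \<Longrightarrow> \<sigma> w = \<tau> w) \<Longrightarrow> Xs enc dec chi \<sigma> L = Xs enc dec chi \<tau> L"
  unfolding Xs_def by (metis (mono_tags, lifting) map_eq_conv)

lemma sbs_cong:
  "(\<And>w. w \<in> set (fv M) \<Longrightarrow> \<sigma> w = \<tau> w) \<Longrightarrow> sbs enc dec chi M \<sigma> = sbs enc dec chi M \<tau>"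
proof (induction M arbitrary: \<sigma> \<tau>)
  case (App M N)
  have "sbs enc dec chi M \<sigma> = sbs enc dec chi M \<tau>" by (rule App.IH(1)) (simp add: App.prems)
  moreover have "sbs enc dec chi N \<sigma> = sbs enc dec chi N \<tau>" by (rule App.IH(2)) (simp add: App.prems)
  ultimately show ?case by simp
next
  case (Lam x A M)
  have "sbs enc dec chi A \<sigma> = sbs enc dec chi A \<tau>"
    by (rule Lam.IH(1)) (simp add: Lam.prems)
  moreover have "Xs enc dec chi \<sigma> (removeAll x (fv M)) = Xs enc dec chi \<tau> (removeAll x (fv M))"
    by (rule Xs_cong) (simp add: Lam.prems)
  moreover have "sbs enc dec chi M (\<sigma>(x := Var z)) = sbs enc dec chi M (\<tau>(x := Var z))" for z
    by (rule Lam.IH(2)) (simp add: Lam.prems)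
  ultimately show ?case by (simp add: Let_def)
next
  case (Pi x A M)
  have "sbs enc dec chi A \<sigma> = sbs enc dec chi A \<tau>"
    by (rule Pi.IH(1)) (simp add: Pi.prems)
  moreover have "Xs enc dec chi \<sigma> (removeAll x (fv M)) = Xs enc dec chi \<tau> (removeAll x (fv M))"
    by (rule Xs_cong) (simp add: Pi.prems)
  moreover have "sbs enc dec chi M (\<sigma>(x := Var z)) = sbs enc dec chi M (\<tau>(x := Var z))" for z
    by (rule Pi.IH(2)) (simp add: Pi.prems)
  ultimately show ?case by (simp add: Let_def)
qed simp_all

locale fresh_names =
  fixes enc :: "'v \<Rightarrow> nat" and dec :: "nat \<Rightarrow> 'v" and chi :: "nat list \<Rightarrow> nat"
  assumes enc_dec: "\<And>n. enc (dec n) = n"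
    and chi_notin: "\<And>ns. chi ns \<notin> set ns"
begin

abbreviation subst :: "('c, 'v) trm \<Rightarrow> ('v \<Rightarrow> ('c, 'v) trm) \<Rightarrow> ('c, 'v) trm" where
  "subst \<equiv> sbs enc dec chi"

abbreviation rename :: "('c, 'v) trm \<Rightarrow> 'v \<Rightarrow> 'v \<Rightarrow> ('c, 'v) trm" where
  "rename M x y \<equiv> usb enc dec chi M x (Var y)"

abbreviation fresh_var :: "('v \<Rightarrow> ('c, 'v) trm) \<Rightarrow> 'v list \<Rightarrow> 'v" where
  "fresh_var \<equiv> Xs enc dec chi"

lemma fresh_var_notin_fv:
  assumes "w \<in> set L"
  shows "fresh_var \<sigma> L \<notin> set (fv (\<sigma> w))"
proof
  let ?vs = "concat (map (\<lambda>y. fv (\<sigma> y)) L)"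
  assume "fresh_var \<sigma> L \<in> set (fv (\<sigma> w))"
  then have "enc (dec (chi (map enc ?vs))) \<in> set (map enc ?vs)"
    using assms unfolding Xs_def Xp_def by auto
  then show False using enc_dec chi_notin by metis
qed

lemma removeAll_fresh_var_fv_upd:
  assumes "z = fresh_var \<sigma> (removeAll x L)"
  shows "removeAll z (concat (map (\<lambda>w. fv ((\<sigma>(x := Var z)) w)) L))
         = concat (map (\<lambda>w. fv (\<sigma> w)) (removeAll x L))"
proof -
  have "(\<lambda>w. fv ((\<sigma>(x := Var z)) w)) = (\<lambda>w. fv (\<sigma> w))(x := [z])" by auto
  moreover have "removeAll z (concat (map ((\<lambda>w. fv (\<sigma> w))(x := [z])) L))
                 = concat (map (\<lambda>w. fv (\<sigma> w)) (removeAll x L))"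
    by (rule removeAll_concat_map_upd) (simp add: assms fresh_var_notin_fv)
  ultimately show ?thesis by simp
qed

lemma fv_subst: "fv (subst M \<sigma>) = concat (map (\<lambda>w. fv (\<sigma> w)) (fv M))"
proof (induction M arbitrary: \<sigma>)
  case (Lam x A M)
  then show ?case by (simp add: Let_def removeAll_fresh_var_fv_upd del: fun_upd_apply)
next
  case (Pi x A M)
  then show ?case by (simp add: Let_def removeAll_fresh_var_fv_upd del: fun_upd_apply)
qed simp_all

lemma fresh_var_subst_upd:
  assumes "z\<^sub>0 = fresh_var \<rho> (removeAll x (fv M))"
  shows "fresh_var \<sigma> (removeAll z\<^sub>0 (fv (subst M (\<rho>(x := Var z\<^sub>0)))))
         = fresh_var (\<lambda>w. subst (\<rho> w) \<sigma>) (removeAll x (fv M))"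
proof -
  have "removeAll z\<^sub>0 (fv (subst M (\<rho>(x := Var z\<^sub>0))))
        = concat (map (\<lambda>w. fv (\<rho> w)) (removeAll x (fv M)))"
    using removeAll_fresh_var_fv_upd[OF assms] by (simp only: fv_subst)
  then show ?thesis
    unfolding Xs_def by (simp add: fv_subst map_concat concat_concat o_def del: fun_upd_apply)
qed

lemma subst_comp_fresh_upd:
  assumes "z\<^sub>0 = fresh_var \<rho> (removeAll x (fv M))"
  shows "subst M (\<lambda>w. subst ((\<rho>(x := Var z\<^sub>0)) w) (\<sigma>(z\<^sub>0 := Var z)))
         = subst M ((\<lambda>w. subst (\<rho> w) \<sigma>)(x := Var z))"
proof (rule sbs_cong)
  fix w assume "w \<in> set (fv M)"
  then have "w \<noteq> x \<Longrightarrow> z\<^sub>0 \<notin> set (fv (\<rho> w))"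
    unfolding assms by (simp add: fresh_var_notin_fv)
  then show "subst ((\<rho>(x := Var z\<^sub>0)) w) (\<sigma>(z\<^sub>0 := Var z))
             = ((\<lambda>w. subst (\<rho> w) \<sigma>)(x := Var z)) w"
    by (auto intro: sbs_cong)
qed

lemma subst_subst: "subst (subst M \<rho>) \<sigma> = subst M (\<lambda>w. subst (\<rho> w) \<sigma>)"
proof (induction M arbitrary: \<rho> \<sigma>)
  case (Lam x A M)
  then show ?case
    by (simp add: Let_def fresh_var_subst_upd subst_comp_fresh_upd del: fun_upd_apply)
next
  case (Pi x A M)
  then show ?case
    by (simp add: Let_def fresh_var_subst_upd subst_comp_fresh_upd del: fun_upd_apply)
qed simp_all

text \<open>Substituting \<open>Var\<close> renames every binder, so it is not the identity on raw terms;
  it is, however, on results of a substitution by variables.\<close>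
lemma subst_Var_subst_renaming:
  assumes "range \<rho> \<subseteq> range Var"
  shows "subst (subst M \<rho>) Var = subst M \<rho>"
proof -
  have "(\<lambda>w. subst (\<rho> w) Var) = \<rho>"
  proof
    fix w
    obtain v where "\<rho> w = Var v" using assms by blast
    then show "subst (\<rho> w) Var = \<rho> w" by simp
  qed
  then show ?thesis by (simp add: subst_subst)
qed

lemma fv_subst_Var: "fv (subst M Var) = fv M"
  by (simp add: fv_subst)

lemma fv_rename: "fv (rename M x y) = map (\<lambda>w. if w = x then y else w) (fv M)"
proof -
  have "concat (map (\<lambda>w. fv ((Var(x := Var y)) w)) L) = map (\<lambda>w. if w = x then y else w) L"
    for L :: "'v list"
    by (induction L) auto
  then show ?thesis unfolding usb_def fv_subst .
qed

lemma subst_rename_upd: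
  assumes "y \<notin> set (removeAll x (fv M))"
  shows "subst (rename M x y) (\<sigma>(y := Var z)) = subst M (\<sigma>(x := Var z))"
  unfolding usb_def subst_subst
  by (rule sbs_cong) (use assms in auto)

lemma binder_parts_eq_if_renamings_eq:
  assumes "y \<notin> set (removeAll x (fv M))" and "y \<notin> set (removeAll x' (fv M'))"
    and "\<And>\<sigma>. subst (rename M x y) \<sigma> = subst (rename M' x' y) \<sigma>"
  shows "removeAll x (fv M) = removeAll x' (fv M')"
    and "subst M (\<sigma>(x := Var z)) = subst M' (\<sigma>(x' := Var z))"
proof -
  have "fv (subst (rename M x y) Var) = fv (subst (rename M' x' y) Var)"
    using assms(3) by simp
  then have "map (\<lambda>w. if w = x then y else w) (fv M) = map (\<lambda>w. if w = x' then y else w) (fv M')"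
    by (simp only: fv_subst_Var fv_rename)
  then show "removeAll x (fv M) = removeAll x' (fv M')"
    using removeAll_map_rename[OF assms(1)] removeAll_map_rename[OF assms(2)] by metis
  show "subst M (\<sigma>(x := Var z)) = subst M' (\<sigma>(x' := Var z))"
    using assms(3)[of "\<sigma>(y := Var z)"]
    by (simp only: subst_rename_upd[OF assms(1)] subst_rename_upd[OF assms(2)])
qed

lemma subst_eq_if_alphas: "alphas enc dec chi M N \<Longrightarrow> subst M \<sigma> = subst N \<sigma>"
proof (induction arbitrary: \<sigma> rule: alphas.induct)
  case (as_lam A A' y x M x' M')
  then show ?case using binder_parts_eq_if_renamings_eq[OF as_lam.hyps(2,3) as_lam.IH(2)]
    by (simp add: Let_def)
next
  case (as_pi A A' y x M x' M')
  then show ?case using binder_parts_eq_if_renamings_eq[OF as_pi.hyps(2,3) as_pi.IH(2)]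
    by (simp add: Let_def)
qed simp_all

lemma rename_eq_if_alphas:
  assumes "alphas enc dec chi (rename M x y) (rename M' x' y)"
  shows "rename M x y = rename M' x' y"
proof -
  have Var_idem: "subst (rename N z y) Var = rename N z y"
    for N :: "('c, 'v) trm" and z
    unfolding usb_def by (rule subst_Var_subst_renaming) auto
  have "rename M x y = subst (rename M x y) Var"
    by (rule Var_idem[symmetric])
  also have "\<dots> = subst (rename M' x' y) Var"
    by (rule subst_eq_if_alphas[OF assms])
  also have "\<dots> = rename M' x' y"
    by (rule Var_idem)
  finally show ?thesis .
qed

lemma alpha_if_alphas: "alphas enc dec chi M N \<Longrightarrow> alpha enc dec chi M N"
  by (induction rule: alphas.induct) (auto intro: alpha.intros rename_eq_if_alphas)

end

theorem mainTheorem8: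
  fixes enc :: "'v \<Rightarrow> nat" and dec :: "nat \<Rightarrow> 'v" and chi :: "nat list \<Rightarrow> nat"
    and M N :: "('c, 'v) trm"
  assumes "\<And>n. enc (dec n) = n"
    and "\<And>ns. chi ns \<notin> set ns"
    and "alphas enc dec chi M N"
  shows "alpha enc dec chi M N"
proof -
  interpret fresh_names enc dec chi
    using assms(1,2) by unfold_locales
  show ?thesis by (rule alpha_if_alphas[OF assms(3)])
qed

end
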